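(* Let $2\le k<n$ be integers. For a probability vector $\lambda=(\lambda_1,\ldots,\lambda_n)$ define $\rho^P(\lambda)\in\mathbb{R}^n$ by $\rho^P(\lambda)_i=\frac1k\sum_{j=i}^{i+k-1}\lambda_j$, indices modulo $n$. Then every fiber of the map $\lambda\mapsto\rho^P(\lambda)$ (on probability vectors) that contains a pure state is a singleton; that is, if $e_m$ is a standard basis vector and $\mu$ is a probability vector with $\rho^P(\mu)=\rho^P(e_m)$, then $\mu=e_m$.
   Context: Probability vectors in $\mathbb{R}^n$ are identified with diagonal density matrices $\mathrm{diag}(\lambda_1,\dots,\lambda_n)$; the pure states among them are the standard basis vectors $e_m$ (i.e. $E_{mm}$). The map is the one induced by the POVM $(\tfrac1kQ_i)_{i=1}^n$, $Q_i$ the diagonal matrix with $1$ in positions $i,\ldots,i+k-1$ mod $n$. *)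

theory Defs
  imports Complex_Main
begin

text \<open>Vectors in R^n are represented as functions nat => real, using 0-based
indices 0..n-1 (only the values on 0..<n matter).\<close>

definition prob_vec :: "nat \<Rightarrow> (nat \<Rightarrow> real) \<Rightarrow> bool" where
  "prob_vec n lam \<longleftrightarrow> (\<forall>i<n. 0 \<le> lam i) \<and> (\<Sum>i<n. lam i) = 1"

definition rhoP :: "nat \<Rightarrow> nat \<Rightarrow> (nat \<Rightarrow> real) \<Rightarrow> nat \<Rightarrow> real" where
  "rhoP n k lam i = (1 / real k) * (\<Sum>j=i..<i+k. lam (j mod n))"

definition std_basis :: "nat \<Rightarrow> nat \<Rightarrow> real" where
  "std_basis m i = (if i = m then 1 else 0)"

end

theory Submission
  imports Defs
begin

text \<open>The entry of \<open>\<rho>\<^sup>P(e\<^sub>m)\<close> belonging to a cyclic window of length \<open>k\<close> that misses \<open>m\<close>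
  is \<open>0\<close>; as \<open>\<mu>\<close> is nonnegative, \<open>\<rho>\<^sup>P(\<mu>) = \<rho>\<^sup>P(e\<^sub>m)\<close> forces \<open>\<mu>\<close> to vanish on all
  such windows. Because \<open>k < n\<close>, every index \<open>j \<noteq> m\<close> lies in a window of length \<open>k\<close>
  avoiding \<open>m\<close>, so \<open>\<mu>\<close> is supported on \<open>{m}\<close>, and normalisation gives \<open>\<mu> = e\<^sub>m\<close>.\<close>

lemma rhoP_eq_sum_offsets:
  "rhoP n k f i = (1 / real k) * (\<Sum>t<k. f ((i + t) mod n))"
proof -
  have "(\<Sum>j=i..<i+k. f (j mod n)) = (\<Sum>t<k. f ((i + t) mod n))"
    by (induction k) auto
  then show ?thesis
    by (simp add: rhoP_def)
qed

lemma rhoP_eq_zero_imp_window_zero: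
  assumes "0 < n" "0 < k" "\<And>j. j < n \<Longrightarrow> 0 \<le> f j"
    and "rhoP n k f i = 0" and "t < k"
  shows "f ((i + t) mod n) = 0"
proof -
  have "(\<Sum>s<k. f ((i + s) mod n)) = 0"
    using assms(2,4) by (simp add: rhoP_eq_sum_offsets)
  moreover have "\<forall>s\<in>{..<k}. 0 \<le> f ((i + s) mod n)"
    using assms(1,3) by simp
  ultimately show ?thesis
    using assms(5) sum_nonneg_eq_0_iff[of "{..<k}" "\<lambda>s. f ((i + s) mod n)"] by auto
qed

lemma rhoP_std_basis_eq_zero:
  assumes "\<forall>t<k. (i + t) mod n \<noteq> m"
  shows "rhoP n k (std_basis m) i = 0"
  using assms by (simp add: rhoP_eq_sum_offsets std_basis_def)

lemma mod_add_ne_self: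
  fixes m e n :: nat
  assumes "m < n" "0 < e" "e < n"
  shows "(m + e) mod n \<noteq> m"
proof
  assume "(m + e) mod n = m"
  then have "(m + e) mod n = m mod n"
    using assms(1) by simp
  then have "n dvd e"
    by (simp add: mod_eq_dvd_iff_nat)
  with assms(2,3) show False
    by (auto dest: dvd_imp_le)
qed

text \<open>The window starts \<open>e = min d (n - k)\<close> steps after \<open>m\<close>, where \<open>d\<close> is the cyclic
  distance from \<open>m\<close> to \<open>j\<close>; it then covers the offsets \<open>e, \<dots>, e + k - 1\<close>, which lie
  in \<open>1, \<dots>, n - 1\<close> and include \<open>d\<close>.\<close>

lemma cyclic_window_avoiding:
  fixes n k m j :: nat
  assumes "0 < k" "k < n" "m < n" "j < n" "j \<noteq> m"
  obtains i t where "i < n" "t < k" "(i + t) mod n = j" "\<forall>s<k. (i + s) mod n \<noteq> m"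
proof -
  define d where "d = (j + n - m) mod n"
  have "(m + d) mod n = (m + (j + n - m)) mod n"
    unfolding d_def by (simp add: mod_add_right_eq)
  also have "m + (j + n - m) = j + n"
    using assms(3) by simp
  finally have m_d: "(m + d) mod n = j"
    using assms(4) by simp
  have "0 < d" "d < n"
    using m_d assms(3,5) by (auto simp: d_def intro!: gr0I)
  define e where "e = min d (n - k)"
  define i where "i = (m + e) mod n"
  have shift: "(i + s) mod n = (m + (e + s)) mod n" for s
    unfolding i_def by (simp add: mod_add_left_eq add.assoc)
  show ?thesis
  proof
    show "i < n"
      using assms(3) by (simp add: i_def)
    show "d - e < k"
      using \<open>d < n\<close> assms(1,2) by (auto simp: e_def min_def)
    show "(i + (d - e)) mod n = j"
      using shift[of "d - e"] m_d by (simp add: e_def)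
    show "\<forall>s<k. (i + s) mod n \<noteq> m"
    proof (intro allI impI)
      fix s
      assume "s < k"
      then have "0 < e + s" "e + s < n"
        using \<open>0 < d\<close> assms(2) by (auto simp: e_def)
      then show "(i + s) mod n \<noteq> m"
        using shift mod_add_ne_self[OF assms(3)] by simp
    qed
  qed
qed

lemma prob_vec_supported_at:
  assumes "prob_vec n mu" "m < n" "\<And>j. j < n \<Longrightarrow> j \<noteq> m \<Longrightarrow> mu j = 0"
  shows "mu m = 1"
proof -
  have "(\<Sum>j<n. mu j) = mu m"
    using assms(2,3) by (subst sum.remove[of _ m]) (auto intro: sum.neutral)
  then show ?thesis
    using assms(1) by (simp add: prob_vec_def)
qed

theorem proposition5p3:
  fixes n k m :: nat and mu :: "nat \<Rightarrow> real"
  assumes "2 \<le> k" and "k < n" and "m < n"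
    and "prob_vec n mu"
    and "\<forall>i<n. rhoP n k mu i = rhoP n k (std_basis m) i"
  shows "\<forall>i<n. mu i = std_basis m i"
proof -
  have "0 < k"
    using assms(1) by simp
  have off_m: "mu j = 0" if j: "j < n" "j \<noteq> m" for j
  proof -
    obtain i t where "i < n" "t < k" "(i + t) mod n = j" and avoid: "\<forall>s<k. (i + s) mod n \<noteq> m"
      using cyclic_window_avoiding[OF \<open>0 < k\<close> assms(2,3) j] by blast
    have "rhoP n k mu i = 0"
      using assms(5) \<open>i < n\<close> rhoP_std_basis_eq_zero[OF avoid] by simp
    then show ?thesis
      using rhoP_eq_zero_imp_window_zero[of n k mu i t] assms(2,4) \<open>0 < k\<close> \<open>t < k\<close>
        \<open>(i + t) mod n = j\<close>
      by (simp add: prob_vec_def)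
  qed
  have "mu m = 1"
    using prob_vec_supported_at[OF assms(4,3)] off_m by blast
  with off_m show ?thesis
    by (auto simp: std_basis_def)
qed

end
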